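(* Let $N\ge 1$, data $x_1,\dots,x_N\in\mathbb{R}$, and parameters $\sigma_\theta,\sigma_x>0$. Consider the one-dimensional Gaussian posterior with prior $\mathcal{N}(0,\sigma_\theta^2)$ and elementary likelihood $x_i|\theta\sim\mathcal{N}(\theta,\sigma_x^2)$, whose posterior mean is $\mu_{\rm post}=\big(\sigma_x^2/\sigma_\theta^2+N\big)^{-1}\sum_{i=1}^N x_i$. For $n\in\{1,\dots,N\}$ and a random index set $I_n$ of size $n$ drawn uniformly from $\{1,\dots,N\}$ (with or without replacement), define the stochastic gradient $\widehat F_n(\theta)=-\theta/\sigma_\theta^2+\frac{N}{n}\sum_{i\in I_n}(x_i-\theta)/\sigma_x^2$. Fix a friction $\gamma>0$, a time step $\Delta t>0$, let $\alpha_t=e^{-\gamma t}$, and consider the scheme $$\begin{aligned}p^{m+1/3}&=\alpha_{\Delta t/2}p^m+(1-\alpha_{\Delta t})^{1/2}G^m,\\ \theta^{m+1/2}&=\theta^m+\tfrac{\Delta t}{2}p^{m+1/3},\\ p^{m+2/3}&=p^{m+1/3}+\Delta t\,\widehat F_n^{(m)}(\theta^{m+1/2}),\\ \theta^{m+1}&=\theta^{m+1/2}+\tfrac{\Delta t}{2}p^{m+2/3},\\ p^{m+1}&=\alpha_{\Delta t/2}p^{m+2/3}+(1-\alpha_{\Delta t})^{1/2}G^{m+1/2},\end{aligned}$$ where $(G^m)_{m\ge0}$, $(G^{m+1/2})_{m\ge0}$ are independent families of i.i.d. standard Gaussians, $\widehat F_n^{(m)}$ uses a fresh index set $I_n^m$,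 the sets $(I_n^m)_{m\ge0}$ are i.i.d. and independent of the Gaussians and of the initial condition $(\theta^0,p^0)$, which has finite first moments. Then there exists $\Delta t_\star>0$ such that for all $\Delta t\in(0,\Delta t_\star]$, $$\lim_{m\to\infty}\mathbb{E}[\theta^m]=\mu_{\rm post},\qquad\lim_{m\to\infty}\mathbb{E}[p^m]=0.$$
   Context: This is the Strang splitting discretization of (kinetic) Langevin dynamics $d\theta=p\,dt$, $dp=\nabla\log\pi(\theta)dt-\gamma p\,dt+\sqrt{2\gamma}\,dW$ in which the exact gradient is replaced by the mini-batch estimator $\widehat F_n$. The claim is that the mean of the sampled parameter is asymptotically unbiased despite mini-batching, for any batch size $n$ and sampling with or without replacement. *)

theory Defs
  imports "HOL-Probability.Probability"
begin

definition batch_with_repl :: "nat \<Rightarrow> nat \<Rightarrow> nat list pmf" where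
  "batch_with_repl N n = pmf_of_set {xs. length xs = n \<and> set xs \<subseteq> {1..N}}"

text \<open>Uniform over ordered lists of distinct indices; its set of entries is a uniform n-subset.\<close>
definition batch_without_repl :: "nat \<Rightarrow> nat \<Rightarrow> nat list pmf" where
  "batch_without_repl N n = pmf_of_set {xs. length xs = n \<and> distinct xs \<and> set xs \<subseteq> {1..N}}"

definition post_mean :: "nat \<Rightarrow> (nat \<Rightarrow> real) \<Rightarrow> real \<Rightarrow> real \<Rightarrow> real" where
  "post_mean N x s_th s_x = inverse (s_x^2 / s_th^2 + real N) * (\<Sum>i=1..N. x i)"

definition Fhat :: "nat \<Rightarrow> nat \<Rightarrow> (nat \<Rightarrow> real) \<Rightarrow> real \<Rightarrow> real \<Rightarrow> nat list \<Rightarrow> real \<Rightarrow> real" where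
  "Fhat N n x s_th s_x I th = - th / s_th^2 + real N / real n * (\<Sum>i\<leftarrow>I. (x i - th) / s_x^2)"

definition alpha :: "real \<Rightarrow> real \<Rightarrow> real" where
  "alpha gamma t = exp (- gamma * t)"

text \<open>One step of the splitting scheme, from (theta^m, p^m) using G^m, I^m, G^(m+1/2).\<close>
definition lstep :: "nat \<Rightarrow> nat \<Rightarrow> (nat \<Rightarrow> real) \<Rightarrow> real \<Rightarrow> real \<Rightarrow> real \<Rightarrow> real
    \<Rightarrow> real \<times> real \<Rightarrow> real \<Rightarrow> nat list \<Rightarrow> real \<Rightarrow> real \<times> real" where
  "lstep N n x s_th s_x gamma dt z g I h =
     (let p1 = alpha gamma (dt/2) * snd z + sqrt (1 - alpha gamma dt) * g;
          th2 = fst z + dt/2 * p1;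
          p2 = p1 + dt * Fhat N n x s_th s_x I th2;
          th' = th2 + dt/2 * p2;
          p' = alpha gamma (dt/2) * p2 + sqrt (1 - alpha gamma dt) * h
      in (th', p'))"

fun traj :: "nat \<Rightarrow> nat \<Rightarrow> (nat \<Rightarrow> real) \<Rightarrow> real \<Rightarrow> real \<Rightarrow> real \<Rightarrow> real
    \<Rightarrow> ('a \<Rightarrow> real) \<Rightarrow> ('a \<Rightarrow> real) \<Rightarrow> (nat \<Rightarrow> 'a \<Rightarrow> real) \<Rightarrow> (nat \<Rightarrow> 'a \<Rightarrow> nat list)
    \<Rightarrow> (nat \<Rightarrow> 'a \<Rightarrow> real) \<Rightarrow> nat \<Rightarrow> 'a \<Rightarrow> real \<times> real" where
  "traj N n x s_th s_x gamma dt th0 p0 G I H 0 \<omega> = (th0 \<omega>, p0 \<omega>)"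
| "traj N n x s_th s_x gamma dt th0 p0 G I H (Suc m) \<omega> =
     lstep N n x s_th s_x gamma dt (traj N n x s_th s_x gamma dt th0 p0 G I H m \<omega>)
       (G m \<omega>) (I m \<omega>) (H m \<omega>)"

text \<open>Sources of randomness: initial condition, G^m, G^(m+1/2), I^m.\<close>
datatype src = Init | Gm nat | Gh nat | Ix nat

definition gen_sets :: "'a measure \<Rightarrow> ('a \<Rightarrow> real) \<Rightarrow> ('a \<Rightarrow> real) \<Rightarrow> (nat \<Rightarrow> 'a \<Rightarrow> real)
    \<Rightarrow> (nat \<Rightarrow> 'a \<Rightarrow> nat list) \<Rightarrow> (nat \<Rightarrow> 'a \<Rightarrow> real) \<Rightarrow> src \<Rightarrow> 'a set set" where
  "gen_sets M th0 p0 G I H k = (case k of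
      Init \<Rightarrow> {(\<lambda>\<omega>. (th0 \<omega>, p0 \<omega>)) -` A \<inter> space M | A. A \<in> sets (borel :: (real \<times> real) measure)}
    | Gm m \<Rightarrow> {G m -` A \<inter> space M | A. A \<in> sets (borel :: real measure)}
    | Gh m \<Rightarrow> {H m -` A \<inter> space M | A. A \<in> sets (borel :: real measure)}
    | Ix m \<Rightarrow> {I m -` A \<inter> space M | A. A \<in> sets (count_space (UNIV :: nat list set))})"

end

theory Submission
  imports Defs "HOL-Combinatorics.Transposition"
begin

text \<open>
  On a batch I of size n the gradient estimator is the affine map
  \<open>\<theta> \<mapsto> -K \<theta> + \<beta> S\<^sub>I\<close>, where \<open>S\<^sub>I\<close> is the sum of the data over I,
  \<open>K = 1/s_th\<^sup>2 + N/s_x\<^sup>2\<close> and \<open>\<beta> = N/(n s_x\<^sup>2)\<close>. Hence one step of the scheme is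
  affine in \<open>(\<theta>, p)\<close>, the Gaussians and \<open>S\<^sub>I\<close>, with coefficients that do not depend on
  the batch. Taking expectations kills the Gaussians and replaces \<open>S\<^sub>I\<close> by its mean
  \<open>n/N (x\<^sub>1 + \<dots> + x\<^sub>N)\<close>, which holds for both sampling schemes because they are
  invariant under transpositions of the data indices; no independence is needed. The means
  therefore follow a deterministic damped leapfrog recursion with fixed point
  \<open>(\<beta> n/N (x\<^sub>1 + \<dots> + x\<^sub>N) / K, 0) = (post_mean, 0)\<close>. If \<open>dt\<^sup>2 K < 4\<close>, the energy
  \<open>K e\<^sup>2 + (1 - dt\<^sup>2 K/4) p\<^sup>2\<close> of the deviation from the fixed point is preserved by the
  Verlet part of a step and strictly dissipated by the friction, which forces convergence.
\<close>

lemma Fhat_eq: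
  "Fhat N n x s_th s_x I th
    = - th / s_th^2 + real N / real n * ((sum_list (map x I) - real (length I) * th) / s_x^2)"
proof -
  have "(\<Sum>i\<leftarrow>I. (x i - th) / s_x^2) = (sum_list (map x I) - real (length I) * th) / s_x^2"
    by (induction I) (auto simp: diff_divide_distrib add_divide_distrib algebra_simps)
  then show ?thesis
    by (simp add: Fhat_def)
qed

lemma Fhat_eq_affine:
  assumes "length I = n" "n \<noteq> 0"
  shows "Fhat N n x s_th s_x I th
    = - (1/s_th^2 + real N/s_x^2) * th + real N / (real n * s_x^2) * sum_list (map x I)"
  unfolding Fhat_eq assms(1) using assms(2)
  by (cases "s_x = 0") (simp_all add: field_simps)

lemma lstep_eq_affine:
  fixes a c K \<beta> :: real
  assumes "length I = n" "n \<noteq> 0"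
    and "a = alpha gamma (dt/2)" "c = sqrt (1 - alpha gamma dt)"
    and "K = 1/s_th^2 + real N/s_x^2" "\<beta> = real N / (real n * s_x^2)"
  shows "lstep N n x s_th s_x gamma dt z g I h =
    ((1 - dt^2*K/2) * fst z + dt*a*(1 - dt^2*K/4) * snd z + dt*c*(1 - dt^2*K/4) * g
        + dt^2*\<beta>/2 * sum_list (map x I),
     - a*dt*K * fst z + a^2*(1 - dt^2*K/2) * snd z + a*c*(1 - dt^2*K/2) * g
        + a*dt*\<beta> * sum_list (map x I) + c * h)"
  unfolding lstep_def Let_def Fhat_eq_affine[OF assms(1,2)] assms(3-6)
  by (simp add: field_simps power2_eq_square)

section \<open>The damped leapfrog map\<close>

lemma damped_leapfrog_energy_identity:
  fixes K dt a e v :: real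
  shows "K * e^2 + (1 - dt^2*K/4) * v^2
      - (K * ((1 - dt^2*K/2) * e + dt*a*(1 - dt^2*K/4) * v)^2
        + (1 - dt^2*K/4) * (- a*dt*K * e + a^2*(1 - dt^2*K/2) * v)^2)
    = (1 - dt^2*K/4) * (1 - a^2) * (v^2 + (- dt*K * e + a*(1 - dt^2*K/2) * v)^2)"
  by (simp add: field_simps power2_eq_square)

lemma damped_leapfrog_tendsto_zero:
  fixes e v :: "nat \<Rightarrow> real" and a K dt :: real
  assumes a: "0 < a" "a < 1" and K: "0 < K" and dt: "0 < dt" "dt^2 * K < 4"
    and e_Suc: "\<And>m. e (Suc m) = (1 - dt^2*K/2) * e m + dt*a*(1 - dt^2*K/4) * v m"
    and v_Suc: "\<And>m. v (Suc m) = - a*dt*K * e m + a^2*(1 - dt^2*K/2) * v m"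
  shows "e \<longlonglongrightarrow> 0" "v \<longlonglongrightarrow> 0"
proof -
  define c where "c = 1 - dt^2*K/4"
  \<comment> \<open>the momentum before the final friction half-step, so that \<open>v (Suc m) = a * w m\<close>\<close>
  define w where "w m = - dt*K * e m + a*(1 - dt^2*K/2) * v m" for m
  define Q where "Q m = K * (e m)^2 + c * (v m)^2" for m
  define d where "d = c * (1 - a^2)"
  have "0 < c" using dt by (simp add: c_def)
  have "a^2 < 1" using a by (simp add: power_less_one_iff)
  with \<open>0 < c\<close> have "0 < d" by (simp add: d_def)
  have Q_drop: "Q m - Q (Suc m) = d * ((v m)^2 + (w m)^2)" for m
    unfolding Q_def e_Suc v_Suc w_def d_def c_def by (rule damped_leapfrog_energy_identity)
  have "Q m \<ge> 0" for m
    unfolding Q_def using K \<open>0 < c\<close> by simp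
  moreover have "decseq Q"
  proof (rule decseq_SucI)
    fix m
    have "0 \<le> d * ((v m)^2 + (w m)^2)"
      using \<open>0 < d\<close> by simp
    then show "Q (Suc m) \<le> Q m"
      using Q_drop[of m] by linarith
  qed
  ultimately obtain L where "Q \<longlonglongrightarrow> L"
    using decseq_convergent by blast
  then have "(\<lambda>m. Q m - Q (Suc m)) \<longlonglongrightarrow> L - L"
    by (intro tendsto_diff LIMSEQ_Suc)
  then have "(\<lambda>m. d * ((v m)^2 + (w m)^2)) \<longlonglongrightarrow> d * 0"
    unfolding Q_drop by simp
  then have "(\<lambda>m. (v m)^2 + (w m)^2) \<longlonglongrightarrow> 0"
    using tendsto_mult_left_iff[of d] \<open>0 < d\<close> by simp
  then have "(\<lambda>m. norm (v m, w m)) \<longlonglongrightarrow> sqrt 0"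
    unfolding norm_Pair real_norm_def power2_abs by (rule tendsto_real_sqrt)
  then have "(\<lambda>m. (v m, w m)) \<longlonglongrightarrow> 0"
    by (simp add: tendsto_norm_zero_iff)
  from tendsto_fst[OF this] tendsto_snd[OF this]
  have v0: "v \<longlonglongrightarrow> 0" and w0: "w \<longlonglongrightarrow> 0"
    by simp_all
  have "e = (\<lambda>m. (a*(1 - dt^2*K/2) * v m - w m) / (dt*K))"
    using dt K by (auto simp: w_def field_simps)
  also have "\<dots> \<longlonglongrightarrow> (a*(1 - dt^2*K/2) * 0 - 0) / (dt*K)"
    by (intro tendsto_intros v0 w0) (use dt K in simp)
  finally show "e \<longlonglongrightarrow> 0" by simp
  show "v \<longlonglongrightarrow> 0" by (rule v0)
qed

lemma damped_leapfrog_tendsto: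
  fixes u v :: "nat \<Rightarrow> real" and a K dt b :: real
  assumes "0 < a" "a < 1" "0 < K" "0 < dt" "dt^2 * K < 4"
    and u_Suc: "\<And>m. u (Suc m) = (1 - dt^2*K/2) * u m + dt*a*(1 - dt^2*K/4) * v m + dt^2/2 * b"
    and v_Suc: "\<And>m. v (Suc m) = - a*dt*K * u m + a^2*(1 - dt^2*K/2) * v m + a*dt * b"
  shows "u \<longlonglongrightarrow> b / K" "v \<longlonglongrightarrow> 0"
proof -
  define e where "e m = u m - b / K" for m
  have "e (Suc m) = (1 - dt^2*K/2) * e m + dt*a*(1 - dt^2*K/4) * v m" for m
    using \<open>0 < K\<close> by (simp add: e_def u_Suc field_simps power2_eq_square)
  moreover have "v (Suc m) = - a*dt*K * e m + a^2*(1 - dt^2*K/2) * v m" for m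
    using \<open>0 < K\<close> by (simp add: e_def v_Suc field_simps)
  ultimately have "e \<longlonglongrightarrow> 0" "v \<longlonglongrightarrow> 0"
    using damped_leapfrog_tendsto_zero[OF assms(1-5)] by blast+
  then show "v \<longlonglongrightarrow> 0" "u \<longlonglongrightarrow> b / K"
    using tendsto_add_const_iff[of "b / K" e 0] by (simp_all add: e_def)
qed

section \<open>Uniform mini-batches\<close>

definition transposition_closed :: "nat set \<Rightarrow> nat list set \<Rightarrow> bool" where
  "transposition_closed A S \<longleftrightarrow>
     (\<forall>i\<in>A. \<forall>j\<in>A. \<forall>xs\<in>S. map (Transposition.transpose i j) xs \<in> S)"

lemma sum_count_list_transposition_closed:
  assumes "finite S" "transposition_closed A S" "i \<in> A" "j \<in> A"
  shows "(\<Sum>xs\<in>S. count_list xs i) = (\<Sum>xs\<in>S. count_list xs j)"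
proof -
  let ?\<tau> = "Transposition.transpose i j"
  have bij: "bij_betw (map ?\<tau>) S S"
    by (rule bij_betw_byWitness[where f'="map ?\<tau>"])
      (use assms(2-4) in \<open>auto simp: transposition_closed_def comp_def\<close>)
  have "(\<Sum>xs\<in>S. count_list xs j) = (\<Sum>xs\<in>S. count_list (map ?\<tau> xs) j)"
    using sum.reindex_bij_betw[OF bij, of "\<lambda>ys. count_list ys j"] by simp
  also have "\<dots> = (\<Sum>xs\<in>S. count_list xs i)"
    using count_list_map_conv[OF inj_transpose[of i j], of _ i] by simp
  finally show ?thesis ..
qed

lemma sum_list_map_eq_sum_count_list:
  fixes f :: "'a \<Rightarrow> 'b::comm_semiring_1"
  assumes "set xs \<subseteq> A" "finite A"
  shows "sum_list (map f xs) = (\<Sum>a\<in>A. of_nat (count_list xs a) * f a)"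
  using assms(1)
proof (induction xs)
  case (Cons y xs)
  have "(\<Sum>a\<in>A. of_nat (count_list (y # xs) a) * f a)
      = (\<Sum>a\<in>A. of_nat (count_list xs a) * f a + (if y = a then f a else 0))"
    by (intro sum.cong) (auto simp: algebra_simps)
  also have "\<dots> = (\<Sum>a\<in>A. of_nat (count_list xs a) * f a) + f y"
    using Cons.prems assms(2) by (simp add: sum.distrib)
  finally show ?case
    using Cons by (simp add: add.commute)
qed simp

lemma sum_sum_list_transposition_closed:
  fixes x :: "nat \<Rightarrow> real"
  assumes "finite S" "1 \<le> N" "transposition_closed {1..N} S"
    and S: "\<And>xs. xs \<in> S \<Longrightarrow> length xs = n \<and> set xs \<subseteq> {1..N}"
  shows "(\<Sum>xs\<in>S. sum_list (map x xs)) = real (card S) * real n / real N * (\<Sum>i=1..N. x i)"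
proof -
  define C where "C i = (\<Sum>xs\<in>S. real (count_list xs i))" for i
  have C_const: "C i = C 1" if "i \<in> {1..N}" for i
    unfolding C_def of_nat_sum[symmetric]
    using sum_count_list_transposition_closed[OF assms(1,3) that, of 1] assms(2) by simp
  have "real N * C 1 = (\<Sum>i=1..N. C 1)"
    by simp
  also have "\<dots> = (\<Sum>i=1..N. C i)"
    by (intro sum.cong refl) (metis C_const)
  also have "\<dots> = (\<Sum>xs\<in>S. real (\<Sum>i=1..N. count_list xs i))"
    unfolding C_def by (subst sum.swap) simp
  also have "\<dots> = real (card S) * real n"
    using S by (simp add: sum_count_set)
  finally have C1: "C 1 = real (card S) * real n / real N"
    using assms(2) by (simp add: field_simps)
  have "(\<Sum>xs\<in>S. sum_list (map x xs)) = (\<Sum>xs\<in>S. \<Sum>i=1..N. real (count_list xs i) * x i)"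
    using S by (intro sum.cong refl sum_list_map_eq_sum_count_list) auto
  also have "\<dots> = (\<Sum>i=1..N. C i * x i)"
    unfolding C_def by (subst sum.swap) (simp add: sum_distrib_right)
  also have "\<dots> = (\<Sum>i=1..N. C 1 * x i)"
    by (intro sum.cong refl) (metis C_const)
  finally show ?thesis
    unfolding C1 by (simp add: sum_distrib_left)
qed

lemma batch_pmf_eq_pmf_of_set:
  assumes "n \<le> N" "D = batch_with_repl N n \<or> D = batch_without_repl N n"
  obtains S where "D = pmf_of_set S" "finite S" "S \<noteq> {}" "transposition_closed {1..N} S"
    "\<And>xs. xs \<in> S \<Longrightarrow> length xs = n \<and> set xs \<subseteq> {1..N}"
proof -
  define A where "A = {xs. length xs = n \<and> set xs \<subseteq> {1..N}}"
  define B where "B = {xs. length xs = n \<and> distinct xs \<and> set xs \<subseteq> {1..N}}"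
  have "finite A"
    using finite_lists_length_eq[of "{1..N}" n] unfolding A_def by (simp add: conj_commute)
  moreover have "B \<subseteq> A"
    unfolding A_def B_def by auto
  moreover have "[1..<n+1] \<in> B"
    using assms(1) unfolding B_def by auto
  moreover have "transposition_closed {1..N} A" "transposition_closed {1..N} B"
    unfolding transposition_closed_def A_def B_def
    by (auto simp: distinct_map Transposition.transpose_def)
  ultimately show ?thesis
    using assms(2) that[of A] that[of B] finite_subset
    unfolding batch_with_repl_def batch_without_repl_def A_def B_def by blast
qed

lemma batch_length:
  assumes "n \<le> N" "D = batch_with_repl N n \<or> D = batch_without_repl N n" "xs \<in> set_pmf D"
  shows "length xs = n"
proof -
  obtain S where "D = pmf_of_set S" "finite S" "S \<noteq> {}"
    "\<And>xs. xs \<in> S \<Longrightarrow> length xs = n \<and> set xs \<subseteq> {1..N}"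
    using batch_pmf_eq_pmf_of_set[OF assms(1,2)] by blast
  then show ?thesis
    using assms(3) by simp
qed

lemma finite_set_pmf_batch:
  assumes "n \<le> N" "D = batch_with_repl N n \<or> D = batch_without_repl N n"
  shows "finite (set_pmf D)"
proof -
  obtain S where "D = pmf_of_set S" "finite S" "S \<noteq> {}"
    using batch_pmf_eq_pmf_of_set[OF assms] by blast
  then show ?thesis
    by simp
qed

lemma batch_expectation_sum_list:
  fixes x :: "nat \<Rightarrow> real"
  assumes "1 \<le> N" "n \<le> N" "D = batch_with_repl N n \<or> D = batch_without_repl N n"
  shows "measure_pmf.expectation D (\<lambda>xs. sum_list (map x xs)) = real n / real N * (\<Sum>i=1..N. x i)"
proof -
  obtain S where S: "D = pmf_of_set S" "finite S" "S \<noteq> {}" "transposition_closed {1..N} S"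
    "\<And>xs. xs \<in> S \<Longrightarrow> length xs = n \<and> set xs \<subseteq> {1..N}"
    using batch_pmf_eq_pmf_of_set[OF assms(2,3)] by blast
  then show ?thesis
    using sum_sum_list_transposition_closed[OF S(2) assms(1) S(4,5)]
    by (simp add: integral_pmf_of_set)
qed

lemma (in prob_space) expectation_finite_pmf_distributed:
  fixes f :: "'b \<Rightarrow> real"
  assumes X: "X \<in> measurable M (count_space UNIV)" and "distr M (count_space UNIV) X = measure_pmf D"
    and "finite (set_pmf D)"
  shows "integrable M (\<lambda>\<omega>. f (X \<omega>))" "expectation (\<lambda>\<omega>. f (X \<omega>)) = measure_pmf.expectation D f"
proof -
  have "integrable (measure_pmf D) f"
    using assms(3) by (rule integrable_measure_pmf_finite)
  then show "integrable M (\<lambda>\<omega>. f (X \<omega>))"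
    using integrable_distr_eq[OF X, of f] assms(2) by simp
  show "expectation (\<lambda>\<omega>. f (X \<omega>)) = measure_pmf.expectation D f"
    using integral_distr[OF X, of f] assms(2) by simp
qed

lemma (in prob_space) AE_finite_pmf_distributed:
  assumes X: "X \<in> measurable M (count_space UNIV)" and "distr M (count_space UNIV) X = measure_pmf D"
  shows "AE \<omega> in M. X \<omega> \<in> set_pmf D"
proof -
  have "AE y in distr M (count_space UNIV) X. y \<in> set_pmf D"
    unfolding assms(2) by (simp add: AE_measure_pmf)
  then show ?thesis
    using AE_distr_iff[OF X, of "\<lambda>y. y \<in> set_pmf D"] by simp
qed

section \<open>Means of the splitting scheme\<close>

lemma distributed_std_normal_mean:
  assumes "distributed M lborel X std_normal_density"
  shows "integrable M X" "integral\<^sup>L M X = 0"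
proof -
  show "integrable M X"
    using distributed_integrable_var[OF assms] integrable_std_normal_moment[of 1] by simp
  have "integral\<^sup>L M X = (\<integral>x. std_normal_density x * x \<partial>lborel)"
    using distributed_integral[OF assms, of "\<lambda>x. x"] by simp
  also have "\<dots> = 0"
    using integral_std_normal_moment_odd[of 0] by simp
  finally show "integral\<^sup>L M X = 0" .
qed

lemma traj_measurable:
  assumes [measurable]: "th0 \<in> borel_measurable M" "p0 \<in> borel_measurable M"
    "\<And>m. G m \<in> borel_measurable M" "\<And>m. H m \<in> borel_measurable M"
    and I: "\<And>m. I m \<in> measurable M (count_space UNIV)"
  shows "(\<lambda>\<omega>. fst (traj N n x s_th s_x gamma dt th0 p0 G I H m \<omega>)) \<in> borel_measurable M
    \<and> (\<lambda>\<omega>. snd (traj N n x s_th s_x gamma dt th0 p0 G I H m \<omega>)) \<in> borel_measurable M"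
proof (induction m)
  case (Suc m)
  have [measurable]: "(\<lambda>\<omega>. sum_list (map x (I m \<omega>))) \<in> borel_measurable M"
    "(\<lambda>\<omega>. real (length (I m \<omega>))) \<in> borel_measurable M"
    "(\<lambda>\<omega>. fst (traj N n x s_th s_x gamma dt th0 p0 G I H m \<omega>)) \<in> borel_measurable M"
    "(\<lambda>\<omega>. snd (traj N n x s_th s_x gamma dt th0 p0 G I H m \<omega>)) \<in> borel_measurable M"
    using Suc by (auto intro: measurable_compose[OF I])
  show ?case
    unfolding traj.simps lstep_def Let_def Fhat_eq by measurable
qed (simp add: assms(1,2))

lemma AE_traj_Suc_eq_affine:
  fixes x :: "nat \<Rightarrow> real" and th0 p0 :: "'a \<Rightarrow> real" and G H :: "nat \<Rightarrow> 'a \<Rightarrow> real"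
    and a c K \<beta> :: real
  assumes "n \<noteq> 0" "AE \<omega> in M. length (I m \<omega>) = n"
    and "a = alpha gamma (dt/2)" "c = sqrt (1 - alpha gamma dt)"
      "K = 1/s_th^2 + real N/s_x^2" "\<beta> = real N / (real n * s_x^2)"
  defines "T \<equiv> traj N n x s_th s_x gamma dt th0 p0 G I H"
  shows "AE \<omega> in M. fst (T (Suc m) \<omega>) = (1 - dt^2*K/2) * fst (T m \<omega>)
      + dt*a*(1 - dt^2*K/4) * snd (T m \<omega>) + dt*c*(1 - dt^2*K/4) * G m \<omega>
      + dt^2*\<beta>/2 * sum_list (map x (I m \<omega>))"
    and "AE \<omega> in M. snd (T (Suc m) \<omega>) = - a*dt*K * fst (T m \<omega>)
      + a^2*(1 - dt^2*K/2) * snd (T m \<omega>) + a*c*(1 - dt^2*K/2) * G m \<omega>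
      + a*dt*\<beta> * sum_list (map x (I m \<omega>)) + c * H m \<omega>"
  using assms(2) by (eventually_elim, simp add: T_def lstep_eq_affine[OF _ assms(1,3-6)])+

lemma (in prob_space) traj_integrable:
  assumes "n \<noteq> 0" "integrable M th0" "integrable M p0"
    and G: "\<And>m. integrable M (G m)" and H: "\<And>m. integrable M (H m)"
    and I: "\<And>m. I m \<in> measurable M (count_space UNIV)"
      "\<And>m. integrable M (\<lambda>\<omega>. sum_list (map x (I m \<omega>)))"
      "\<And>m. AE \<omega> in M. length (I m \<omega>) = n"
  shows "integrable M (\<lambda>\<omega>. fst (traj N n x s_th s_x gamma dt th0 p0 G I H m \<omega>))
    \<and> integrable M (\<lambda>\<omega>. snd (traj N n x s_th s_x gamma dt th0 p0 G I H m \<omega>))"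
proof (induction m)
  case (Suc m)
  note step = AE_traj_Suc_eq_affine[OF assms(1) I(3) refl refl refl refl, where m=m]
  have "th0 \<in> borel_measurable M" "p0 \<in> borel_measurable M"
    "G m \<in> borel_measurable M" "H m \<in> borel_measurable M" for m
    using assms(2,3) G H by auto
  note measurable = traj_measurable[where G=G and H=H and I=I, OF this I(1), where m="Suc m"]
  have "integrable M (\<lambda>\<omega>. fst (traj N n x s_th s_x gamma dt th0 p0 G I H (Suc m) \<omega>))"
    by (rule integrable_cong_AE_imp[OF _ conjunct1[OF measurable] AE_symmetric[OF step(1)]])
      (use Suc G H I(2) in auto)
  moreover have "integrable M (\<lambda>\<omega>. snd (traj N n x s_th s_x gamma dt th0 p0 G I H (Suc m) \<omega>))"
    by (rule integrable_cong_AE_imp[OF _ conjunct2[OF measurable] AE_symmetric[OF step(2)]])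
      (use Suc G H I(2) in auto)
  ultimately show ?case ..
qed (use assms(2,3) in simp)

lemma (in prob_space) traj_mean_Suc:
  fixes a c K \<beta> mb :: real
  assumes "n \<noteq> 0" "integrable M th0" "integrable M p0"
    and G: "\<And>m. integrable M (G m)" "\<And>m. expectation (G m) = 0"
    and H: "\<And>m. integrable M (H m)" "\<And>m. expectation (H m) = 0"
    and I: "\<And>m. I m \<in> measurable M (count_space UNIV)"
      "\<And>m. integrable M (\<lambda>\<omega>. sum_list (map x (I m \<omega>)))"
      "\<And>m. AE \<omega> in M. length (I m \<omega>) = n"
      "\<And>m. expectation (\<lambda>\<omega>. sum_list (map x (I m \<omega>))) = mb"
    and coeffs: "a = alpha gamma (dt/2)" "c = sqrt (1 - alpha gamma dt)"
      "K = 1/s_th^2 + real N/s_x^2" "\<beta> = real N / (real n * s_x^2)"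
  defines "u \<equiv> \<lambda>m. expectation (\<lambda>\<omega>. fst (traj N n x s_th s_x gamma dt th0 p0 G I H m \<omega>))"
    and "v \<equiv> \<lambda>m. expectation (\<lambda>\<omega>. snd (traj N n x s_th s_x gamma dt th0 p0 G I H m \<omega>))"
  shows "u (Suc m) = (1 - dt^2*K/2) * u m + dt*a*(1 - dt^2*K/4) * v m + dt^2/2 * (\<beta> * mb)"
    and "v (Suc m) = - a*dt*K * u m + a^2*(1 - dt^2*K/2) * v m + a*dt * (\<beta> * mb)"
proof -
  note step = AE_traj_Suc_eq_affine[OF assms(1) I(3) coeffs, where m=m]
  have integrable: "integrable M (\<lambda>\<omega>. fst (traj N n x s_th s_x gamma dt th0 p0 G I H k \<omega>))
    \<and> integrable M (\<lambda>\<omega>. snd (traj N n x s_th s_x gamma dt th0 p0 G I H k \<omega>))" for k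
    by (rule traj_integrable[OF assms(1-3) G(1) H(1) I(1-3)])
  show "u (Suc m) = (1 - dt^2*K/2) * u m + dt*a*(1 - dt^2*K/4) * v m + dt^2/2 * (\<beta> * mb)"
    unfolding u_def v_def using integrable[of m] integrable[of "Suc m"] G H I(2,4)
    by (subst integral_cong_AE[OF _ _ step(1)]) (auto simp del: traj.simps)
  show "v (Suc m) = - a*dt*K * u m + a^2*(1 - dt^2*K/2) * v m + a*dt * (\<beta> * mb)"
    unfolding u_def v_def using integrable[of m] integrable[of "Suc m"] G H I(2,4)
    by (subst integral_cong_AE[OF _ _ step(2)]) (auto simp del: traj.simps)
qed

lemma (in prob_space) traj_mean_tendsto:
  assumes "n \<noteq> 0" "s_th \<noteq> 0" "0 < gamma" "0 < dt" "dt^2 * (1/s_th^2 + real N/s_x^2) < 4"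
    and "integrable M th0" "integrable M p0"
    and G: "\<And>m. integrable M (G m)" "\<And>m. expectation (G m) = 0"
    and H: "\<And>m. integrable M (H m)" "\<And>m. expectation (H m) = 0"
    and I: "\<And>m. I m \<in> measurable M (count_space UNIV)"
      "\<And>m. integrable M (\<lambda>\<omega>. sum_list (map x (I m \<omega>)))"
      "\<And>m. AE \<omega> in M. length (I m \<omega>) = n"
      "\<And>m. expectation (\<lambda>\<omega>. sum_list (map x (I m \<omega>))) = mb"
  shows "(\<lambda>m. expectation (\<lambda>\<omega>. fst (traj N n x s_th s_x gamma dt th0 p0 G I H m \<omega>)))
      \<longlonglongrightarrow> real N / (real n * s_x^2) * mb / (1/s_th^2 + real N/s_x^2)"
    and "(\<lambda>m. expectation (\<lambda>\<omega>. snd (traj N n x s_th s_x gamma dt th0 p0 G I H m \<omega>))) \<longlonglongrightarrow> 0"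
proof -
  define a where "a = alpha gamma (dt/2)"
  define c where "c = sqrt (1 - alpha gamma dt)"
  define K where "K = 1/s_th^2 + real N/s_x^2"
  define \<beta> where "\<beta> = real N / (real n * s_x^2)"
  have "0 < K"
    unfolding K_def using \<open>s_th \<noteq> 0\<close> by (intro add_pos_nonneg) auto
  moreover have "0 < a" "a < 1"
    using \<open>0 < gamma\<close> \<open>0 < dt\<close> by (simp_all add: a_def alpha_def)
  moreover note mean_Suc = traj_mean_Suc[where G=G and H=H and I=I,
      OF assms(1,6,7) G H I a_def c_def K_def \<beta>_def]
  ultimately show "(\<lambda>m. expectation (\<lambda>\<omega>. fst (traj N n x s_th s_x gamma dt th0 p0 G I H m \<omega>)))
      \<longlonglongrightarrow> real N / (real n * s_x^2) * mb / (1/s_th^2 + real N/s_x^2)"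
    and "(\<lambda>m. expectation (\<lambda>\<omega>. snd (traj N n x s_th s_x gamma dt th0 p0 G I H m \<omega>))) \<longlonglongrightarrow> 0"
    using damped_leapfrog_tendsto[where
        u="\<lambda>m. expectation (\<lambda>\<omega>. fst (traj N n x s_th s_x gamma dt th0 p0 G I H m \<omega>))" and
        v="\<lambda>m. expectation (\<lambda>\<omega>. snd (traj N n x s_th s_x gamma dt th0 p0 G I H m \<omega>))",
        OF _ _ _ \<open>0 < dt\<close> _ mean_Suc] assms(5)
    unfolding K_def \<beta>_def by auto
qed

theorem mainTheorem3:
  fixes M :: "'a measure"
    and N n :: nat and x :: "nat \<Rightarrow> real"
    and s_th s_x gamma :: real
    and D :: "nat list pmf"
    and th0 p0 :: "'a \<Rightarrow> real"
    and G H :: "nat \<Rightarrow> 'a \<Rightarrow> real"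
    and I :: "nat \<Rightarrow> 'a \<Rightarrow> nat list"
  assumes "prob_space M"
    and "1 \<le> N" and "1 \<le> n" and "n \<le> N"
    and "0 < s_th" and "0 < s_x" and "0 < gamma"
    and "D = batch_with_repl N n \<or> D = batch_without_repl N n"
    and "integrable M th0" and "integrable M p0"
    and "\<And>m. distributed M lborel (G m) std_normal_density"
    and "\<And>m. distributed M lborel (H m) std_normal_density"
    and "\<And>m. I m \<in> measurable M (count_space UNIV)"
    and "\<And>m. distr M (count_space UNIV) (I m) = measure_pmf D"
    and "prob_space.indep_sets M (gen_sets M th0 p0 G I H) UNIV"
  shows "\<exists>dt_star>0. \<forall>dt. 0 < dt \<and> dt \<le> dt_star \<longrightarrow>
           (\<lambda>m. integral\<^sup>L M (\<lambda>\<omega>. fst (traj N n x s_th s_x gamma dt th0 p0 G I H m \<omega>)))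
              \<longlonglongrightarrow> post_mean N x s_th s_x
         \<and> (\<lambda>m. integral\<^sup>L M (\<lambda>\<omega>. snd (traj N n x s_th s_x gamma dt th0 p0 G I H m \<omega>)))
              \<longlonglongrightarrow> 0"
proof -
  interpret prob_space M by fact
  define K where "K = 1/s_th^2 + real N/s_x^2"
  have "0 < K"
    unfolding K_def using \<open>0 < s_th\<close> by (intro add_pos_nonneg) auto
  have post_mean: "real N / (real n * s_x^2) * (real n / real N * (\<Sum>i=1..N. x i)) / K
      = post_mean N x s_th s_x"
    unfolding post_mean_def K_def using assms(2,3,5,6) by (simp add: field_simps)
  have batch_sum: "integrable M (\<lambda>\<omega>. sum_list (map x (I m \<omega>)))"
    "expectation (\<lambda>\<omega>. sum_list (map x (I m \<omega>))) = real n / real N * (\<Sum>i=1..N. x i)" for m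
    using expectation_finite_pmf_distributed[OF assms(13,14) finite_set_pmf_batch[OF assms(4,8)],
        of "\<lambda>xs. sum_list (map x xs)"] batch_expectation_sum_list[OF assms(2,4,8)]
    by simp_all
  have batch_len: "AE \<omega> in M. length (I m \<omega>) = n" for m
    using AE_finite_pmf_distributed[OF assms(13,14)] by eventually_elim (rule batch_length[OF assms(4,8)])
  have G: "integrable M (G m)" "expectation (G m) = 0"
    and H: "integrable M (H m)" "expectation (H m) = 0" for m
    using distributed_std_normal_mean assms(11,12) by blast+
  show ?thesis
  proof (intro exI[of _ "1 / sqrt K"] conjI allI impI)
    fix dt :: real
    assume dt: "0 < dt \<and> dt \<le> 1 / sqrt K"
    then have "dt^2 * K < 4"
      using \<open>0 < K\<close> power_mono[of dt "1 / sqrt K" 2] by (simp add: field_simps)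
    note lim = traj_mean_tendsto[where G=G and H=H and I=I and N=N and s_th=s_th and s_x=s_x and dt=dt,
        OF _ _ \<open>0 < gamma\<close> _ this[unfolded K_def] assms(9,10) G H assms(13) batch_sum(1) batch_len
        batch_sum(2)]
    show "(\<lambda>m. expectation (\<lambda>\<omega>. fst (traj N n x s_th s_x gamma dt th0 p0 G I H m \<omega>)))
        \<longlonglongrightarrow> post_mean N x s_th s_x"
      and "(\<lambda>m. expectation (\<lambda>\<omega>. snd (traj N n x s_th s_x gamma dt th0 p0 G I H m \<omega>))) \<longlonglongrightarrow> 0"
      using lim[folded K_def, unfolded post_mean] dt assms(3,5) by auto
  qed (use \<open>0 < K\<close> in simp)
qed

end
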